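(* Let $a>0$, $b>0$, $g>0$, $m>0$, $n>0$ and $0<e<1$, and consider the quadratic equation in $y$ $$a_1y^2+a_2y+a_3=0,$$ where $a_1=(eg+1)n$, $a_2=(b+m)(eg+1)+n(e-a)$, $a_3=e(b+m)-ab$, and let $\Delta=a_2^2-4a_1a_3$. Then: (1) if $a>\frac{e(m+b)}{b}$, the equation has a positive root $y_1=\frac{-a_2+\sqrt{\Delta}}{2a_1}$; (2) if $n>\frac{(eg+1)b^2+m(eg+1)b}{me}$ and $a=\frac{e(m+b)}{b}$, the equation has a positive root $y_1=\frac{-a_2+\sqrt{\Delta}}{2a_1}$.
   Context: This quadratic is the equation satisfied by the $y$-coordinate of a positive (endemic) equilibrium of the planar system $\dot x=a-ex-\frac{xy}{1+gy}$, $\dot y=\frac{xy}{1+gy}-y-\frac{my}{b+ny}$ (a rescaled SIR epidemic model with saturated incidence and saturated treatment), after substituting $x=\frac{a(1+gy)}{e+(eg+1)y}$. *)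

theory Defs
  imports Complex_Main
begin

end

theory Submission
  imports Defs "HOL-Library.Quadratic_Discriminant"
begin

(* Under (1) the constant term a3 is negative, so the
   discriminant exceeds a2^2 and the larger root is positive (the roots have opposite signs).
   Under (2) the constant term vanishes, and the bound on n makes a2 negative, so the larger
   root is -a2/a1 > 0. *)

lemma discrim_nonneg_and_upper_root_pos_of_const_neg:
  fixes A B C :: real
  assumes "A > 0" "C < 0"
  shows "discrim A B C \<ge> 0 \<and> (- B + sqrt (discrim A B C)) / (2 * A) > 0"
proof -
  have "discrim A B C > B\<^sup>2"
    using assms by (simp add: discrim_def mult_pos_neg)
  then have "discrim A B C \<ge> 0" and "sqrt (discrim A B C) > \<bar>B\<bar>"
    using zero_le_power2[of B] real_sqrt_less_mono[of "B\<^sup>2"] by (linarith, simp)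
  then show ?thesis
    using \<open>A > 0\<close> by simp
qed

lemma discrim_nonneg_and_upper_root_pos_of_const_zero:
  fixes A B :: real
  assumes "A > 0" "B < 0"
  shows "discrim A B 0 \<ge> 0 \<and> (- B + sqrt (discrim A B 0)) / (2 * A) > 0"
  using assms by (simp add: discrim_def divide_neg_pos)

lemma linear_coeff_neg_at_threshold:
  fixes a b g m n e :: real
  assumes "b > 0" "m > 0" "e > 0"
    and "a = e * (m + b) / b"
    and "n > ((e*g + 1) * b^2 + m * (e*g + 1) * b) / (m * e)"
  shows "(b + m) * (e*g + 1) + n * (e - a) < 0"
proof -
  have ab: "a * b = e * (m + b)"
    using assms by simp
  have "((b + m) * (e*g + 1) + n * (e - a)) * b = (b + m) * (e*g + 1) * b + n * e * b - n * (a * b)"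
    by (simp add: algebra_simps)
  also have "\<dots> = (b + m) * (e*g + 1) * b - n * e * m"
    unfolding ab by (simp add: algebra_simps)
  finally have "((b + m) * (e*g + 1) + n * (e - a)) * b = (b + m) * (e*g + 1) * b - n * e * m" .
  moreover have "n * e * m > (b + m) * (e*g + 1) * b"
    using assms by (simp add: pos_divide_less_eq algebra_simps power2_eq_square)
  ultimately have "((b + m) * (e*g + 1) + n * (e - a)) * b < 0"
    by linarith
  then show ?thesis
    using \<open>b > 0\<close> by (simp add: mult_less_0_iff)
qed

theorem lemma1p1:
  fixes a b g m n e :: real
  assumes "a > 0" "b > 0" "g > 0" "m > 0" "n > 0" "0 < e" "e < 1"
  defines "a1 \<equiv> (e*g + 1) * n"
      and "a2 \<equiv> (b + m) * (e*g + 1) + n * (e - a)"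
      and "a3 \<equiv> e * (b + m) - a * b"
  defines "\<Delta> \<equiv> a2^2 - 4 * a1 * a3"
  defines "y1 \<equiv> (- a2 + sqrt \<Delta>) / (2 * a1)"
  shows "(a > e * (m + b) / b \<longrightarrow>
            \<Delta> \<ge> 0 \<and> y1 > 0 \<and> a1 * y1^2 + a2 * y1 + a3 = 0)
       \<and> (n > ((e*g + 1) * b^2 + m * (e*g + 1) * b) / (m * e) \<and> a = e * (m + b) / b \<longrightarrow>
            \<Delta> \<ge> 0 \<and> y1 > 0 \<and> a1 * y1^2 + a2 * y1 + a3 = 0)"
proof -
  have a1_pos: "a1 > 0"
    unfolding a1_def using assms by (intro mult_pos_pos add_pos_pos) auto
  have \<Delta>_discrim: "\<Delta> = discrim a1 a2 a3"
    unfolding \<Delta>_def discrim_def ..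
  have y1_root: "a1 * y1^2 + a2 * y1 + a3 = 0" if "\<Delta> \<ge> 0"
    using discriminant_nonneg[of a1 a2 a3 y1] a1_pos that unfolding y1_def \<Delta>_discrim by simp
  show ?thesis
  proof (rule conjI; rule impI)
    assume "a > e * (m + b) / b"
    then have "a3 < 0"
      unfolding a3_def using \<open>b > 0\<close> by (simp add: field_simps)
    then show "\<Delta> \<ge> 0 \<and> y1 > 0 \<and> a1 * y1^2 + a2 * y1 + a3 = 0"
      using discrim_nonneg_and_upper_root_pos_of_const_neg[OF a1_pos] y1_root
      unfolding y1_def \<Delta>_discrim by blast
  next
    assume n_large: "n > ((e*g + 1) * b^2 + m * (e*g + 1) * b) / (m * e) \<and> a = e * (m + b) / b"
    then have "a3 = 0"
      unfolding a3_def using \<open>b > 0\<close> by simp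
    moreover have "a2 < 0"
      unfolding a2_def using n_large assms by (intro linear_coeff_neg_at_threshold) auto
    ultimately show "\<Delta> \<ge> 0 \<and> y1 > 0 \<and> a1 * y1^2 + a2 * y1 + a3 = 0"
      using discrim_nonneg_and_upper_root_pos_of_const_zero[OF a1_pos] y1_root
      unfolding y1_def \<Delta>_discrim by blast
  qed
qed

end
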